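(* Let $R$ be a commutative ring with nonzero identity, $\delta$ an expansion of ideals of $R$, and $I$ a $\delta$-$n$-ideal of $R$ such that $(\delta(I):x)\subseteq\delta((I:x))\neq R$ for all $x\in R\setminus\delta(I)$. Then $(I:x)$ is a $\delta$-$n$-ideal of $R$ for every $x\in R\setminus\delta(I)$. In particular, if $I$ is a quasi $n$-ideal of $R$, then $(I:x)$ is a quasi $n$-ideal of $R$ for all $x\in R\setminus\sqrt{I}$.
   Context: An expansion of ideals of a ring $R$ is a map $\delta$ from the set of ideals of $R$ to itself such that $I\subseteq\delta(I)$ for every ideal $I$, and $\delta(I)\subseteq\delta(J)$ whenever $I\subseteq J$. $\sqrt{0}$ denotes the nilradical of $R$ and $(I:x)=\{r\in R: rx\in I\}$. Given an expansion $\delta$, a proper ideal $I$ of $R$ is a $\delta$-$n$-ideal if whenever $a,b\in R$ with $ab\in I$ and $a\notin\sqrt{0}$, then $b\in\delta(I)$. A quasi $n$-ideal is a $\delta_1$-$n$-ideal, where $\delta_1(J)=\sqrt{J}$. *)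

theory Defs
  imports Main
begin

definition is_ideal :: "'a::comm_ring_1 set \<Rightarrow> bool" where
  "is_ideal I \<longleftrightarrow> 0 \<in> I \<and> (\<forall>a\<in>I. \<forall>b\<in>I. a + b \<in> I) \<and> (\<forall>a\<in>I. - a \<in> I)
     \<and> (\<forall>r a. a \<in> I \<longrightarrow> r * a \<in> I)"

definition proper_ideal :: "'a::comm_ring_1 set \<Rightarrow> bool" where
  "proper_ideal I \<longleftrightarrow> is_ideal I \<and> I \<noteq> UNIV"

definition rad :: "'a::comm_ring_1 set \<Rightarrow> 'a set" where
  "rad I = {a. \<exists>n::nat. a ^ n \<in> I}"

definition nilrad :: "'a::comm_ring_1 set" where
  "nilrad = rad {0}"

definition colon :: "'a::comm_ring_1 set \<Rightarrow> 'a \<Rightarrow> 'a set" where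
  "colon I x = {r. r * x \<in> I}"

definition expansion :: "('a::comm_ring_1 set \<Rightarrow> 'a set) \<Rightarrow> bool" where
  "expansion \<delta> \<longleftrightarrow>
     (\<forall>I. is_ideal I \<longrightarrow> is_ideal (\<delta> I) \<and> I \<subseteq> \<delta> I) \<and>
     (\<forall>I J. is_ideal I \<longrightarrow> is_ideal J \<longrightarrow> I \<subseteq> J \<longrightarrow> \<delta> I \<subseteq> \<delta> J)"

definition delta_n_ideal :: "('a::comm_ring_1 set \<Rightarrow> 'a set) \<Rightarrow> 'a set \<Rightarrow> bool" where
  "delta_n_ideal \<delta> I \<longleftrightarrow> proper_ideal I \<and>
     (\<forall>a b. a * b \<in> I \<longrightarrow> a \<notin> nilrad \<longrightarrow> b \<in> \<delta> I)"

definition quasi_n_ideal :: "'a::comm_ring_1 set \<Rightarrow> bool" where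
  "quasi_n_ideal I \<longleftrightarrow> delta_n_ideal rad I"

end

theory Submission
  imports Defs
begin

text \<open>For a \<open>\<delta>\<close>-n-ideal \<open>I\<close> and \<open>x \<notin> \<delta> I\<close>: if \<open>a b \<in> (I : x)\<close> with \<open>a\<close> not nilpotent,
  then \<open>a (b x) \<in> I\<close>, so \<open>b x \<in> \<delta> I\<close>, i.e. \<open>b \<in> (\<delta> I : x) \<subseteq> \<delta> (I : x)\<close>.
  For the quasi case one checks that \<open>\<delta> = rad\<close> is an expansion satisfying the hypotheses:
  if \<open>b x \<in> rad I\<close> then \<open>x\<^sup>n b\<^sup>n \<in> I\<close> with \<open>x\<^sup>n\<close> not nilpotent (as \<open>x \<notin> rad I\<close>),
  so \<open>b\<^sup>n \<in> rad I\<close>, whence some power of \<open>b\<close> lies in \<open>(I : x)\<close>.\<close>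

lemma is_ideal_colon:
  "is_ideal I \<Longrightarrow> is_ideal (colon I x)"
  unfolding is_ideal_def colon_def by (auto simp: distrib_right mult.assoc)

lemma ideal_mult_left: "is_ideal I \<Longrightarrow> a \<in> I \<Longrightarrow> r * a \<in> I"
  by (simp add: is_ideal_def)

lemma ideal_mult_right: "is_ideal I \<Longrightarrow> a \<in> I \<Longrightarrow> a * r \<in> I"
  using ideal_mult_left[of I a r] by (simp add: mult.commute)

lemma ideal_sum_mem:
  assumes "is_ideal I" and "\<And>k. k \<in> K \<Longrightarrow> f k \<in> I"
  shows "sum f K \<in> I"
  using assms(2)
  by (induction K rule: infinite_finite_induct) (use assms(1) in \<open>simp_all add: is_ideal_def\<close>)

lemma ideal_power_mem:
  assumes "is_ideal I" and "a ^ m \<in> I" and "m \<le> k"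
  shows "a ^ k \<in> I"
proof -
  have "a ^ k = a ^ (k - m) * a ^ m"
    using \<open>m \<le> k\<close> by (simp flip: power_add)
  then show ?thesis
    using ideal_mult_left[OF assms(1,2)] by simp
qed

text \<open>In the binomial expansion of \<open>(a + b)\<^sup>m\<^sup>+\<^sup>n\<close> every term contains \<open>a\<^sup>m\<close> or \<open>b\<^sup>n\<close>.\<close>
lemma rad_add_mem:
  assumes I: "is_ideal I" and a: "a ^ m \<in> I" and b: "b ^ n \<in> I"
  shows "a + b \<in> rad I"
proof -
  have "of_nat (m + n choose k) * a ^ k * b ^ (m + n - k) \<in> I" for k
  proof (cases "m \<le> k")
    case True
    then have "a ^ k \<in> I" using ideal_power_mem[OF I a] by blast
    then have "a ^ k * (of_nat (m + n choose k) * b ^ (m + n - k)) \<in> I"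
      using I by (intro ideal_mult_right)
    then show ?thesis by (simp add: mult_ac)
  next
    case False
    then have "b ^ (m + n - k) \<in> I" using ideal_power_mem[OF I b] by simp
    then show ?thesis using I by (intro ideal_mult_left)
  qed
  then have "(a + b) ^ (m + n) \<in> I"
    unfolding binomial_ring by (intro ideal_sum_mem[OF I])
  then show ?thesis by (auto simp: rad_def)
qed

lemma is_ideal_rad:
  assumes I: "is_ideal I"
  shows "is_ideal (rad I)"
  unfolding is_ideal_def
proof (intro conjI ballI allI impI)
  show "0 \<in> rad I"
    using I by (auto simp: rad_def is_ideal_def intro: exI[of _ 1])
next
  fix a b assume "a \<in> rad I" "b \<in> rad I"
  then show "a + b \<in> rad I"
    using rad_add_mem[OF I] by (auto simp: rad_def)
next
  fix a assume "a \<in> rad I"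
  then obtain m where "a ^ m \<in> I" by (auto simp: rad_def)
  then have "(- a) ^ m \<in> I"
    unfolding power_minus[of a m] using I by (rule ideal_mult_left[rotated])
  then show "- a \<in> rad I" by (auto simp: rad_def)
next
  fix r a assume "a \<in> rad I"
  then obtain m where "a ^ m \<in> I" by (auto simp: rad_def)
  then have "(r * a) ^ m \<in> I"
    unfolding power_mult_distrib using I by (rule ideal_mult_left[rotated])
  then show "r * a \<in> rad I" by (auto simp: rad_def)
qed

lemma subset_rad: "I \<subseteq> rad I"
  unfolding rad_def by (auto intro: exI[of _ 1])

lemma rad_mono: "I \<subseteq> J \<Longrightarrow> rad I \<subseteq> rad J"
  unfolding rad_def by auto

lemma expansion_rad: "expansion rad"
  unfolding expansion_def using is_ideal_rad subset_rad rad_mono by blast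

lemma delta_n_ideal_colon:
  assumes \<delta>: "expansion \<delta>" and I: "delta_n_ideal \<delta> I" and x: "x \<notin> \<delta> I"
    and colon_sub: "colon (\<delta> I) x \<subseteq> \<delta> (colon I x)" and proper: "\<delta> (colon I x) \<noteq> UNIV"
  shows "delta_n_ideal \<delta> (colon I x)"
  unfolding delta_n_ideal_def proper_ideal_def
proof (intro conjI allI impI)
  show ideal: "is_ideal (colon I x)"
    using I is_ideal_colon by (auto simp: delta_n_ideal_def proper_ideal_def)
  then have "colon I x \<subseteq> \<delta> (colon I x)"
    using \<delta> by (simp add: expansion_def)
  then show "colon I x \<noteq> UNIV"
    using proper by blast
  fix a b assume "a * b \<in> colon I x" and a: "a \<notin> nilrad"
  then have "a * (b * x) \<in> I" by (simp add: colon_def mult.assoc)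
  then have "b * x \<in> \<delta> I" using I a by (simp add: delta_n_ideal_def)
  then show "b \<in> \<delta> (colon I x)" using colon_sub by (auto simp: colon_def)
qed

lemma rad_colon_ne_UNIV:
  assumes "x \<notin> J"
  shows "rad (colon J x) \<noteq> UNIV"
proof
  assume "rad (colon J x) = UNIV"
  then have "1 \<in> rad (colon J x)" by simp
  then show False using assms by (simp add: rad_def colon_def)
qed

lemma colon_rad_subset_rad_colon:
  assumes J: "quasi_n_ideal J" and x: "x \<notin> rad J"
  shows "colon (rad J) x \<subseteq> rad (colon J x)"
proof
  fix b assume "b \<in> colon (rad J) x"
  then obtain n where "(b * x) ^ n \<in> J" by (auto simp: colon_def rad_def)
  then have xb: "x ^ n * b ^ n \<in> J" by (simp add: power_mult_distrib mult.commute)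
  have J0: "0 \<in> J"
    using J by (simp add: quasi_n_ideal_def delta_n_ideal_def proper_ideal_def is_ideal_def)
  have "x ^ n \<notin> nilrad"
  proof
    assume "x ^ n \<in> nilrad"
    then obtain m where "x ^ (n * m) = 0" by (auto simp: nilrad_def rad_def power_mult)
    then have "x ^ (n * m) \<in> J" using J0 by simp
    then show False using x by (auto simp: rad_def)
  qed
  then have "b ^ n \<in> rad J"
    using J xb by (simp add: quasi_n_ideal_def delta_n_ideal_def)
  then obtain k where "b ^ (n * k) \<in> J" by (auto simp: rad_def power_mult)
  moreover have "is_ideal J"
    using J by (simp add: quasi_n_ideal_def delta_n_ideal_def proper_ideal_def)
  ultimately have "b ^ (n * k) * x \<in> J"
    by (simp add: ideal_mult_right)
  then show "b \<in> rad (colon J x)" by (auto simp: rad_def colon_def)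
qed

lemma quasi_n_ideal_colon:
  assumes J: "quasi_n_ideal J" and x: "x \<notin> rad J"
  shows "quasi_n_ideal (colon J x)"
proof -
  have "x \<notin> J" using x subset_rad by blast
  then show ?thesis
    using J x unfolding quasi_n_ideal_def
    by (intro delta_n_ideal_colon expansion_rad colon_rad_subset_rad_colon rad_colon_ne_UNIV)
      (simp_all add: quasi_n_ideal_def)
qed

theorem lemma2p11:
  fixes \<delta> :: "'a::comm_ring_1 set \<Rightarrow> 'a set" and I J :: "'a set"
  shows "((expansion \<delta> \<and> delta_n_ideal \<delta> I \<and>
           (\<forall>x. x \<notin> \<delta> I \<longrightarrow> colon (\<delta> I) x \<subseteq> \<delta> (colon I x) \<and> \<delta> (colon I x) \<noteq> UNIV))
         \<longrightarrow> (\<forall>x. x \<notin> \<delta> I \<longrightarrow> delta_n_ideal \<delta> (colon I x)))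
       \<and> (quasi_n_ideal J \<longrightarrow> (\<forall>x. x \<notin> rad J \<longrightarrow> quasi_n_ideal (colon J x)))"
  using delta_n_ideal_colon quasi_n_ideal_colon by blast

end
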